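(* Let $P_1,\dots,P_m$ be Hermitian $n$-qubit Pauli operators, let $U_1,\dots,U_{m+1}$ be $n$-qubit Clifford unitaries, let $\beta\in\{-1,1\}^m$, and let $$E=U_{m+1}\cdot\frac{I+\beta_mP_m}{2}\cdot U_m\cdots U_2\cdot\frac{I+\beta_1P_1}{2}\cdot U_1 .$$ If $E^2=E$, then $E$ is a Hermitian (orthogonal) projector, i.e. $E^\dagger=E=E^2$.
   Context: An $n$-qubit Pauli operator is $c\,\sigma_1\otimes\cdots\otimes\sigma_n$ with $c\in\{\pm1,\pm i\}$ and $\sigma_j\in\{I,X,Y,Z\}$; it is Hermitian iff $c\in\{\pm1\}$. A unitary $U$ is Clifford if $UPU^\dagger$ is a Pauli operator for every Pauli operator $P$. *)

theory Defs
  imports "Jordan_Normal_Form.Schur_Decomposition"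
begin

definition kron :: "complex mat \<Rightarrow> complex mat \<Rightarrow> complex mat" where
  "kron A B = mat (dim_row A * dim_row B) (dim_col A * dim_col B)
     (\<lambda>(i, j). A $$ (i div dim_row B, j div dim_col B) * B $$ (i mod dim_row B, j mod dim_col B))"

datatype pauli = PI | PX | PY | PZ

definition pauli_mat :: "pauli \<Rightarrow> complex mat" where
  "pauli_mat s = (case s of
      PI \<Rightarrow> mat_of_rows_list 2 [[1, 0], [0, 1]]
    | PX \<Rightarrow> mat_of_rows_list 2 [[0, 1], [1, 0]]
    | PY \<Rightarrow> mat_of_rows_list 2 [[0, - \<i>], [\<i>, 0]]
    | PZ \<Rightarrow> mat_of_rows_list 2 [[1, 0], [0, -1]])"

definition pauli_string :: "pauli list \<Rightarrow> complex mat" where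
  "pauli_string ss = foldr (\<lambda>s M. kron (pauli_mat s) M) ss (1\<^sub>m 1)"

definition is_pauli :: "nat \<Rightarrow> complex mat \<Rightarrow> bool" where
  "is_pauli n P \<longleftrightarrow> (\<exists>c ss. c \<in> {1, -1, \<i>, -\<i>} \<and> length ss = n \<and> P = c \<cdot>\<^sub>m pauli_string ss)"

definition is_hermitian :: "complex mat \<Rightarrow> bool" where
  "is_hermitian A \<longleftrightarrow> mat_adjoint A = A"

definition is_unitary :: "nat \<Rightarrow> complex mat \<Rightarrow> bool" where
  "is_unitary d U \<longleftrightarrow> U \<in> carrier_mat d d \<and> mat_adjoint U * U = 1\<^sub>m d \<and> U * mat_adjoint U = 1\<^sub>m d"

definition is_clifford :: "nat \<Rightarrow> complex mat \<Rightarrow> bool" where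
  "is_clifford n U \<longleftrightarrow> is_unitary (2 ^ n) U \<and>
     (\<forall>P. is_pauli n P \<longrightarrow> is_pauli n (U * P * mat_adjoint U))"

text \<open>E_k = U_{k+1} (I + beta_k P_k)/2 U_k ... U_2 (I + beta_1 P_1)/2 U_1; indices start at 1.\<close>
fun chain_op :: "nat \<Rightarrow> (nat \<Rightarrow> complex mat) \<Rightarrow> (nat \<Rightarrow> complex mat) \<Rightarrow> (nat \<Rightarrow> int) \<Rightarrow> nat \<Rightarrow> complex mat" where
  "chain_op n U P \<beta> 0 = U 1"
| "chain_op n U P \<beta> (Suc k) =
     U (k + 2) * ((1 / 2 :: complex) \<cdot>\<^sub>m (1\<^sub>m (2 ^ n) + of_int (\<beta> (k + 1)) \<cdot>\<^sub>m P (k + 1)))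
       * chain_op n U P \<beta> k"

end

theory Submission
  imports Defs
begin

(* Each factor of E is a contraction for the Euclidean norm: the Clifford unitaries trivially,
   and each (I + beta P)/2 because it is an orthogonal projector, a Hermitian Pauli operator
   squaring to the identity. So E is a contraction. An idempotent contraction is an orthogonal
   projector: if E x = x and E y = 0, then |x|^2 = |E (x + t y)|^2 <= |x + t y|^2 for every
   scalar t, which forces <x, y> = 0; hence range and kernel of E are orthogonal and E is
   self-adjoint. *)

lemma dim_row_mat_adjoint [simp]: "dim_row (mat_adjoint A) = dim_col (A :: complex mat)"
  and dim_col_mat_adjoint [simp]: "dim_col (mat_adjoint A) = dim_row (A :: complex mat)"
  unfolding mat_adjoint_def by auto

lemma mat_adjoint_carrier [simp]: "(A :: complex mat) \<in> carrier_mat m n \<Longrightarrow> mat_adjoint A \<in> carrier_mat n m"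
  by auto

lemma index_mat_adjoint [simp]:
  "i < dim_col A \<Longrightarrow> j < dim_row A \<Longrightarrow> mat_adjoint (A :: complex mat) $$ (i, j) = cnj (A $$ (j, i))"
  unfolding mat_adjoint_def by (simp add: mat_of_rows_def)

lemma mat_adjoint_add:
  "(A :: complex mat) \<in> carrier_mat m n \<Longrightarrow> B \<in> carrier_mat m n \<Longrightarrow> mat_adjoint (A + B) = mat_adjoint A + mat_adjoint B"
  by (rule eq_matI) auto

lemma mat_adjoint_smult: "(A :: complex mat) \<in> carrier_mat m n \<Longrightarrow> mat_adjoint (c \<cdot>\<^sub>m A) = cnj c \<cdot>\<^sub>m mat_adjoint A"
  by (rule eq_matI) auto

lemma mat_adjoint_one [simp]: "mat_adjoint (1\<^sub>m n :: complex mat) = 1\<^sub>m n"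
  by (rule eq_matI) auto

lemma conjugate_unit_vec [simp]: "conjugate (unit_vec n i :: complex vec) = unit_vec n i"
  by (rule eq_vecI) (auto simp: unit_vec_def)

lemma cscalar_prod_add_left:
  "u \<in> carrier_vec n \<Longrightarrow> w \<in> carrier_vec n \<Longrightarrow> v \<in> carrier_vec n \<Longrightarrow>
   (u + w) \<bullet>c v = u \<bullet>c v + w \<bullet>c (v :: complex vec)"
  by (simp add: add_scalar_prod_distrib)

lemma cscalar_prod_add_right:
  "u \<in> carrier_vec n \<Longrightarrow> v \<in> carrier_vec n \<Longrightarrow> w \<in> carrier_vec n \<Longrightarrow>
   u \<bullet>c (v + w) = u \<bullet>c v + u \<bullet>c (w :: complex vec)"
  by (simp add: conjugate_add_vec scalar_prod_add_distrib)

lemma cscalar_prod_smult_right: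
  "u \<in> carrier_vec n \<Longrightarrow> v \<in> carrier_vec n \<Longrightarrow> u \<bullet>c (a \<cdot>\<^sub>v v) = cnj a * (u \<bullet>c (v :: complex vec))"
  by (simp add: conjugate_smult_vec)

lemma cnj_cscalar_prod:
  "u \<in> carrier_vec n \<Longrightarrow> v \<in> carrier_vec n \<Longrightarrow> cnj (u \<bullet>c v) = v \<bullet>c (u :: complex vec)"
  using conjugate_sprod_vec[of u n "conjugate v"] comm_scalar_prod[of "conjugate u" n v] by simp

lemma cscalar_prod_unit_vec_left:
  "i < n \<Longrightarrow> v \<in> carrier_vec n \<Longrightarrow> unit_vec n i \<bullet>c v = cnj ((v :: complex vec) $ i)"
  by (simp add: conjugate_vec_def)

lemma cscalar_prod_mult_mat_vec_adjoint:
  fixes A :: "complex mat"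
  assumes A: "A \<in> carrier_mat n m" and u: "u \<in> carrier_vec m" and v: "v \<in> carrier_vec n"
  shows "(A *\<^sub>v u) \<bullet>c v = u \<bullet>c (mat_adjoint A *\<^sub>v v)"
proof -
  have "(A *\<^sub>v u) \<bullet>c v = (\<Sum>i<n. \<Sum>j<m. A $$ (i, j) * u $ j * cnj (v $ i))"
    using A u v by (simp add: scalar_prod_def atLeast0LessThan sum_distrib_right)
  also have "\<dots> = (\<Sum>j<m. \<Sum>i<n. A $$ (i, j) * u $ j * cnj (v $ i))"
    by (rule sum.swap)
  also have "\<dots> = u \<bullet>c (mat_adjoint A *\<^sub>v v)"
    using A u v by (simp add: scalar_prod_def atLeast0LessThan sum_distrib_left ac_simps)
  finally show ?thesis .
qed

lemma mat_adjoint_eqI: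
  fixes A :: "complex mat"
  assumes A: "A \<in> carrier_mat n n"
    and self_adjoint: "\<And>u v. u \<in> carrier_vec n \<Longrightarrow> v \<in> carrier_vec n \<Longrightarrow> (A *\<^sub>v u) \<bullet>c v = u \<bullet>c (A *\<^sub>v v)"
  shows "mat_adjoint A = A"
proof (rule eq_matI)
  fix i j assume "i < dim_row A" "j < dim_col A"
  with A have i: "i < n" and j: "j < n" by auto
  have "A $$ (i, j) = (A *\<^sub>v unit_vec n j) \<bullet>c unit_vec n i"
    using A i j by simp
  also have "\<dots> = unit_vec n j \<bullet>c (A *\<^sub>v unit_vec n i)"
    by (rule self_adjoint) auto
  also have "\<dots> = mat_adjoint A $$ (i, j)"
    using A i j by (simp add: cscalar_prod_unit_vec_left)
  finally show "mat_adjoint A $$ (i, j) = A $$ (i, j)" by simp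
qed (use A in auto)

section \<open>Contractions and idempotents\<close>

text \<open>Inner products are compared in the order of \<^theory>\<open>HOL-Library.Complex_Order\<close>,
  under which a nonnegative complex number is a nonnegative real.\<close>

definition contraction :: "nat \<Rightarrow> complex mat \<Rightarrow> bool" where
  "contraction d A \<longleftrightarrow> A \<in> carrier_mat d d \<and> (\<forall>v \<in> carrier_vec d. (A *\<^sub>v v) \<bullet>c (A *\<^sub>v v) \<le> v \<bullet>c v)"

lemma contraction_mult:
  assumes A: "contraction d A" and B: "contraction d B"
  shows "contraction d (A * B)"
  unfolding contraction_def
proof (intro conjI ballI)
  have Ac: "A \<in> carrier_mat d d" and Bc: "B \<in> carrier_mat d d"
    using A B by (auto simp: contraction_def)
  then show "A * B \<in> carrier_mat d d" by simp
  fix v :: "complex vec" assume v: "v \<in> carrier_vec d"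
  have "((A * B) *\<^sub>v v) \<bullet>c ((A * B) *\<^sub>v v) = (A *\<^sub>v (B *\<^sub>v v)) \<bullet>c (A *\<^sub>v (B *\<^sub>v v))"
    using Ac Bc v by simp
  also have "\<dots> \<le> (B *\<^sub>v v) \<bullet>c (B *\<^sub>v v)"
    using A Bc v by (simp add: contraction_def)
  also have "\<dots> \<le> v \<bullet>c v"
    using B v by (simp add: contraction_def)
  finally show "((A * B) *\<^sub>v v) \<bullet>c ((A * B) *\<^sub>v v) \<le> v \<bullet>c v" .
qed

lemma unitary_imp_contraction:
  assumes "is_unitary d U"
  shows "contraction d U"
  unfolding contraction_def
proof (intro conjI ballI)
  show U: "U \<in> carrier_mat d d"
    using assms by (simp add: is_unitary_def)
  have UU: "mat_adjoint U * U = 1\<^sub>m d"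
    using assms by (simp add: is_unitary_def)
  fix v :: "complex vec" assume v: "v \<in> carrier_vec d"
  have "(U *\<^sub>v v) \<bullet>c (U *\<^sub>v v) = v \<bullet>c (mat_adjoint U *\<^sub>v (U *\<^sub>v v))"
    using U v by (simp add: cscalar_prod_mult_mat_vec_adjoint)
  also have "\<dots> = v \<bullet>c ((mat_adjoint U * U) *\<^sub>v v)"
    using U v by (simp add: assoc_mult_mat_vec[of _ d d])
  also have "\<dots> = v \<bullet>c v"
    using v by (simp add: UU)
  finally show "(U *\<^sub>v v) \<bullet>c (U *\<^sub>v v) \<le> v \<bullet>c v" by simp
qed

lemma hermitian_idempotent_imp_contraction:
  assumes A: "A \<in> carrier_mat d d" and herm: "mat_adjoint A = A" and idem: "A * A = A"
  shows "contraction d A"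
  unfolding contraction_def
proof (intro conjI ballI)
  fix v :: "complex vec" assume v: "v \<in> carrier_vec d"
  define w where "w = A *\<^sub>v v"
  have w: "w \<in> carrier_vec d" using A v by (simp add: w_def)
  have self_adjoint: "(A *\<^sub>v u) \<bullet>c v = u \<bullet>c (A *\<^sub>v v)" if "u \<in> carrier_vec d" for u
    using cscalar_prod_mult_mat_vec_adjoint[OF A that v] herm by simp
  have "w \<bullet>c w = v \<bullet>c (A *\<^sub>v (A *\<^sub>v v))"
    unfolding w_def using cscalar_prod_mult_mat_vec_adjoint[OF A v w] herm w_def by simp
  also have "\<dots> = v \<bullet>c w"
    using A v idem by (simp flip: assoc_mult_mat_vec add: w_def)
  finally have ww: "w \<bullet>c w = v \<bullet>c w" .
  have wv: "w \<bullet>c v = v \<bullet>c w"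
    unfolding w_def using self_adjoint[OF v] .
  have "(v + (-1) \<cdot>\<^sub>v w) \<bullet>c (v + (-1) \<cdot>\<^sub>v w) = v \<bullet>c v - w \<bullet>c w"
    using v w ww wv
    by (simp add: cscalar_prod_add_left[of _ d] cscalar_prod_add_right[of _ d]
        cscalar_prod_smult_right[of _ d])
  with conjugate_square_ge_0_vec[of "v + (-1) \<cdot>\<^sub>v w"]
  show "(A *\<^sub>v v) \<bullet>c (A *\<^sub>v v) \<le> v \<bullet>c v"
    by (simp add: w_def)
qed (rule A)

lemma contraction_fixed_orthogonal_kernel:
  assumes E: "contraction d E"
    and x: "x \<in> carrier_vec d" and Ex: "E *\<^sub>v x = x"
    and y: "y \<in> carrier_vec d" and Ey: "E *\<^sub>v y = 0\<^sub>v d"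
  shows "x \<bullet>c y = 0"
proof -
  define a where "a = x \<bullet>c y"
  define r where "r = Re (y \<bullet>c y)"
  have r: "r \<ge> 0" and yy: "y \<bullet>c y = of_real r"
    using conjugate_square_ge_0_vec[of y] by (auto simp: r_def less_eq_complex_def complex_eq_iff)
  have yx: "y \<bullet>c x = cnj a"
    using cnj_cscalar_prod[OF x y] by (simp add: a_def)
  define s where "s = 1 / (r + 1)"
  have s: "s > 0" "s * r < 1"
    using r by (auto simp: s_def field_simps)
  define t where "t = - of_real s * a"
  have Ec: "E \<in> carrier_mat d d" using E by (simp add: contraction_def)
  have "t \<cdot>\<^sub>v 0\<^sub>v d = 0\<^sub>v d" by auto
  then have "E *\<^sub>v (x + t \<cdot>\<^sub>v y) = x"
    using Ec x y Ex Ey by (simp add: mult_add_distrib_mat_vec mult_mat_vec)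
  then have "x \<bullet>c x \<le> (x + t \<cdot>\<^sub>v y) \<bullet>c (x + t \<cdot>\<^sub>v y)"
    using E x y by (metis contraction_def add_carrier_vec smult_carrier_vec)
  also have "\<dots> = x \<bullet>c x + (cnj t * a + t * cnj a + t * cnj t * of_real r)"
    using x y yx yy
    by (simp add: cscalar_prod_add_left[of _ d] cscalar_prod_add_right[of _ d]
        cscalar_prod_smult_right[of _ d] a_def algebra_simps)
  also have "cnj t * a + t * cnj a + t * cnj t * of_real r = of_real ((cmod a)\<^sup>2 * (s * (s * r - 2)))"
    unfolding t_def of_real_mult complex_norm_square by (simp add: algebra_simps)
  finally have "0 \<le> (cmod a)\<^sup>2 * (s * (s * r - 2))"
    by (simp add: less_eq_complex_def)
  with s have "cmod a = 0"
    by (auto simp: zero_le_mult_iff)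
  then show ?thesis by (simp add: a_def)
qed

lemma idempotent_contraction_hermitian:
  assumes E: "contraction d E" and idem: "E * E = E"
  shows "mat_adjoint E = E"
proof -
  have Ec: "E \<in> carrier_mat d d" using E by (simp add: contraction_def)
  have EE: "E *\<^sub>v (E *\<^sub>v v) = E *\<^sub>v v" if "v \<in> carrier_vec d" for v
    using assoc_mult_mat_vec[OF Ec Ec that] idem by simp
  have range_part: "(E *\<^sub>v u) \<bullet>c v = (E *\<^sub>v u) \<bullet>c (E *\<^sub>v v)"
    if u: "u \<in> carrier_vec d" and v: "v \<in> carrier_vec d" for u v
  proof -
    have "E *\<^sub>v (v + (-1) \<cdot>\<^sub>v (E *\<^sub>v v)) = 0\<^sub>v d"
      using Ec v EE[OF v] by (simp add: mult_add_distrib_mat_vec mult_mat_vec) (rule eq_vecI, auto)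
    then have "(E *\<^sub>v u) \<bullet>c (v + (-1) \<cdot>\<^sub>v (E *\<^sub>v v)) = 0"
      using Ec u v EE[OF u] by (intro contraction_fixed_orthogonal_kernel[OF E]) auto
    then show ?thesis
      using Ec u v by (simp add: cscalar_prod_add_right[of _ d] cscalar_prod_smult_right[of _ d])
  qed
  show ?thesis
  proof (rule mat_adjoint_eqI[OF Ec])
    fix u v :: "complex vec" assume u: "u \<in> carrier_vec d" and v: "v \<in> carrier_vec d"
    have "(E *\<^sub>v u) \<bullet>c v = (E *\<^sub>v u) \<bullet>c (E *\<^sub>v v)"
      by (rule range_part[OF u v])
    also have "\<dots> = cnj ((E *\<^sub>v v) \<bullet>c u)"
      using Ec u v range_part[OF v u] cnj_cscalar_prod[of "E *\<^sub>v v" d "E *\<^sub>v u"] by simp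
    also have "\<dots> = u \<bullet>c (E *\<^sub>v v)"
      using Ec u v cnj_cscalar_prod[of "E *\<^sub>v v" d u] by simp
    finally show "(E *\<^sub>v u) \<bullet>c v = u \<bullet>c (E *\<^sub>v v)" .
  qed
qed

lemma hermitian_involution_projector:
  fixes P :: "complex mat" and b :: int
  assumes P: "P \<in> carrier_mat d d" and herm: "mat_adjoint P = P" and invol: "P * P = 1\<^sub>m d"
    and b: "b \<in> {-1, 1}"
  defines "Q \<equiv> (1 / 2 :: complex) \<cdot>\<^sub>m (1\<^sub>m d + of_int b \<cdot>\<^sub>m P)"
  shows "mat_adjoint Q = Q" and "Q * Q = Q"
proof -
  define c :: complex where "c = of_int b"
  have c: "cnj c = c" "c * c = 1" using b by (auto simp: c_def)
  define M where "M = 1\<^sub>m d + c \<cdot>\<^sub>m P"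
  have M: "M \<in> carrier_mat d d" using P by (simp add: M_def)
  have "mat_adjoint M = M"
    using P c herm by (simp add: M_def mat_adjoint_add[of _ d d] mat_adjoint_smult[of _ d d])
  then show "mat_adjoint Q = Q"
    using M by (simp add: Q_def c_def[symmetric] M_def[symmetric] mat_adjoint_smult)
  have "M * P = 1\<^sub>m d * P + (c \<cdot>\<^sub>m P) * P"
    unfolding M_def by (rule add_mult_distrib_mat) (use P in auto)
  also have "\<dots> = P + c \<cdot>\<^sub>m 1\<^sub>m d"
    using P invol by (simp add: mult_smult_assoc_mat[OF P P])
  finally have MP: "M * P = P + c \<cdot>\<^sub>m 1\<^sub>m d" .
  have "M * M = M * 1\<^sub>m d + M * (c \<cdot>\<^sub>m P)"
    using mult_add_distrib_mat[OF M one_carrier_mat smult_carrier_mat[OF P]] by (simp add: M_def)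
  also have "\<dots> = M + c \<cdot>\<^sub>m (P + c \<cdot>\<^sub>m 1\<^sub>m d)"
    using M P by (simp add: mult_smult_distrib[OF M P] MP)
  also have "\<dots> = 2 \<cdot>\<^sub>m M"
    using P c unfolding M_def by (intro eq_matI) (auto simp: algebra_simps)
  finally have "M * M = 2 \<cdot>\<^sub>m M" .
  then show "Q * Q = Q"
    using M unfolding Q_def c_def[symmetric] M_def[symmetric]
    by (simp add: mult_smult_distrib[of _ d d] mult_smult_assoc_mat[of _ d d]) (rule eq_matI, auto)
qed

section \<open>Tensor products and Pauli operators\<close>

lemma sum_lessThan_mult:
  fixes f :: "nat \<Rightarrow> 'a::comm_monoid_add"
  shows "(\<Sum>k<a * b. f k) = (\<Sum>x<a. \<Sum>y<b. f (x * b + y))"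
proof -
  have "(\<Sum>k<a * b. f k) = (\<Sum>x<a. sum f {x * b..<x * b + b})"
    using sum.nat_group[of f b a] by simp
  also have "\<dots> = (\<Sum>x<a. \<Sum>y<b. f (x * b + y))"
  proof (rule sum.cong[OF refl])
    fix x
    have "sum f {x * b..<x * b + b} = sum f {0 + x * b..<b + x * b}" by (simp add: add.commute)
    also have "\<dots> = sum (f \<circ> plus (x * b)) {0..<b}" by (rule sum.atLeastLessThan_shift_bounds)
    finally show "sum f {x * b..<x * b + b} = (\<Sum>y<b. f (x * b + y))" by (simp add: atLeast0LessThan)
  qed
  finally show ?thesis .
qed

lemma dim_row_kron [simp]: "dim_row (kron A B) = dim_row A * dim_row B"
  and dim_col_kron [simp]: "dim_col (kron A B) = dim_col A * dim_col B"
  unfolding kron_def by simp_all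

lemma index_kron:
  "i < dim_row A * dim_row B \<Longrightarrow> j < dim_col A * dim_col B \<Longrightarrow>
   kron A B $$ (i, j) = A $$ (i div dim_row B, j div dim_col B) * B $$ (i mod dim_row B, j mod dim_col B)"
  unfolding kron_def by simp

lemma kron_mult:
  assumes A: "A \<in> carrier_mat a1 a2" and B: "B \<in> carrier_mat b1 b2"
    and C: "C \<in> carrier_mat a2 a3" and D: "D \<in> carrier_mat b2 b3"
  shows "kron A B * kron C D = kron (A * C) (B * D)"
proof (rule eq_matI)
  show "dim_row (kron A B * kron C D) = dim_row (kron (A * C) (B * D))"
    "dim_col (kron A B * kron C D) = dim_col (kron (A * C) (B * D))"
    using A B C D unfolding kron_def by auto
  fix i j assume "i < dim_row (kron (A * C) (B * D))" "j < dim_col (kron (A * C) (B * D))"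
  hence i: "i < a1 * b1" and j: "j < a3 * b3" using A B C D unfolding kron_def by auto
  have b1: "b1 > 0" and b3: "b3 > 0" using i j by (auto intro: ccontr)
  have id: "i div b1 < a1" "j div b3 < a3" "i mod b1 < b1" "j mod b3 < b3"
    using i j b1 b3 by (auto simp: less_mult_imp_div_less mult.commute)
  have "(kron A B * kron C D) $$ (i, j) = (\<Sum>k<a2 * b2. kron A B $$ (i, k) * kron C D $$ (k, j))"
    using A B C D i j unfolding kron_def by (simp add: scalar_prod_def atLeast0LessThan)
  also have "\<dots> = (\<Sum>x<a2. \<Sum>y<b2. kron A B $$ (i, x * b2 + y) * kron C D $$ (x * b2 + y, j))"
    by (rule sum_lessThan_mult)
  also have "\<dots> = (\<Sum>x<a2. \<Sum>y<b2. (A $$ (i div b1, x) * C $$ (x, j div b3)) *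
      (B $$ (i mod b1, y) * D $$ (y, j mod b3)))"
  proof (intro sum.cong refl)
    fix x y assume x: "x \<in> {..<a2}" and y: "y \<in> {..<b2}"
    have "(x + 1) * b2 \<le> a2 * b2" using x by (intro mult_right_mono) auto
    hence k: "x * b2 + y < a2 * b2" using y by simp
    have dm: "(x * b2 + y) div b2 = x" "(x * b2 + y) mod b2 = y" using y by auto
    show "kron A B $$ (i, x * b2 + y) * kron C D $$ (x * b2 + y, j) =
      (A $$ (i div b1, x) * C $$ (x, j div b3)) * (B $$ (i mod b1, y) * D $$ (y, j mod b3))"
      using A B C D i j k dm by (simp add: index_kron)
  qed
  also have "\<dots> = (\<Sum>x<a2. A $$ (i div b1, x) * C $$ (x, j div b3)) *
      (\<Sum>y<b2. B $$ (i mod b1, y) * D $$ (y, j mod b3))"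
    by (simp add: sum_product)
  also have "\<dots> = (A * C) $$ (i div b1, j div b3) * (B * D) $$ (i mod b1, j mod b3)"
    using A B C D id by (simp add: scalar_prod_def atLeast0LessThan)
  also have "\<dots> = kron (A * C) (B * D) $$ (i, j)"
    using A B C D i j by (simp add: index_kron)
  finally show "(kron A B * kron C D) $$ (i, j) = kron (A * C) (B * D) $$ (i, j)" .
qed

lemma kron_one: "kron (1\<^sub>m a) (1\<^sub>m b) = 1\<^sub>m (a * b)"
proof (rule eq_matI)
  fix i j assume "i < dim_row (1\<^sub>m (a * b) :: complex mat)" "j < dim_col (1\<^sub>m (a * b) :: complex mat)"
  hence i: "i < a * b" and j: "j < a * b" by auto
  then have b: "b > 0" by (auto intro: ccontr)
  have "i div b < a" "j div b < a" using i j b by (auto simp: less_mult_imp_div_less)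
  then show "kron (1\<^sub>m a) (1\<^sub>m b) $$ (i, j) = 1\<^sub>m (a * b) $$ (i, j)"
    using i j b by (simp add: index_kron) (metis div_mult_mod_eq)
qed (auto simp: kron_def)

lemma pauli_mat_carrier: "pauli_mat s \<in> carrier_mat 2 2"
  by (cases s) (auto simp: pauli_mat_def mat_of_rows_list_def)

lemma pauli_mat_square: "pauli_mat s * pauli_mat s = 1\<^sub>m 2"
proof (rule eq_matI)
  fix i j assume "i < dim_row (1\<^sub>m 2 :: complex mat)" "j < dim_col (1\<^sub>m 2 :: complex mat)"
  hence "i = 0 \<or> i = 1" "j = 0 \<or> j = 1" by auto
  thus "(pauli_mat s * pauli_mat s) $$ (i, j) = 1\<^sub>m 2 $$ (i, j)"
    by (cases s) (auto simp: pauli_mat_def mat_of_rows_list_def scalar_prod_def numeral_2_eq_2)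
qed (use pauli_mat_carrier[of s] in auto)

lemma pauli_string_Nil [simp]: "pauli_string [] = 1\<^sub>m 1"
  and pauli_string_Cons [simp]: "pauli_string (s # ss) = kron (pauli_mat s) (pauli_string ss)"
  unfolding pauli_string_def by simp_all

lemma pauli_string_carrier: "pauli_string ss \<in> carrier_mat (2 ^ length ss) (2 ^ length ss)"
proof (induction ss)
  case (Cons s ss)
  then show ?case
    using pauli_mat_carrier[of s] by (intro carrier_matI) auto
qed simp

lemma pauli_string_square: "pauli_string ss * pauli_string ss = 1\<^sub>m (2 ^ length ss)"
proof (induction ss)
  case (Cons s ss)
  then show ?case
    using kron_mult[OF pauli_mat_carrier pauli_string_carrier pauli_mat_carrier pauli_string_carrier]
    by (simp add: pauli_mat_square kron_one)
qed simp

lemma pauli_carrier: "is_pauli n P \<Longrightarrow> P \<in> carrier_mat (2 ^ n) (2 ^ n)"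
  using pauli_string_carrier by (auto simp: is_pauli_def)

lemma hermitian_pauli_square:
  assumes pauli: "is_pauli n P" and herm: "is_hermitian P"
  shows "P * P = 1\<^sub>m (2 ^ n)"
proof -
  define d :: nat where "d = 2 ^ n"
  obtain c ss where c: "c \<in> {1, -1, \<i>, -\<i>}" and len: "length ss = n" and P_eq: "P = c \<cdot>\<^sub>m pauli_string ss"
    using pauli unfolding is_pauli_def by auto
  have S: "pauli_string ss \<in> carrier_mat d d" "pauli_string ss * pauli_string ss = 1\<^sub>m d"
    using pauli_string_carrier[of ss] pauli_string_square[of ss] len by (simp_all add: d_def)
  have P: "P \<in> carrier_mat d d" using S by (simp add: P_eq)
  have PP: "P * P = (c * c) \<cdot>\<^sub>m 1\<^sub>m d"
    using S unfolding P_eq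
    by (simp add: mult_smult_distrib[of _ d d] mult_smult_assoc_mat[of _ d d]) (rule eq_matI, auto)
  (* Hermiticity excludes the phases +-i: P * P = c^2 I must then be positive semidefinite. *)
  define e :: "complex vec" where "e = unit_vec d 0"
  have e: "e \<in> carrier_vec d" "e \<bullet>c e = 1"
    by (simp_all add: e_def d_def)
  have "0 \<le> (P *\<^sub>v e) \<bullet>c (P *\<^sub>v e)"
    by (rule conjugate_square_ge_0_vec)
  also have "\<dots> = e \<bullet>c ((P * P) *\<^sub>v e)"
    using P e herm by (simp add: cscalar_prod_mult_mat_vec_adjoint is_hermitian_def)
  also have "(P * P) *\<^sub>v e = (c * c) \<cdot>\<^sub>v e"
    unfolding PP using e(1) by (intro eq_vecI) (auto simp: e_def)
  also have "e \<bullet>c ((c * c) \<cdot>\<^sub>v e) = cnj (c * c)"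
    using e by (simp add: cscalar_prod_smult_right[of _ d])
  finally have "c * c = 1"
    using c by (auto simp: less_eq_complex_def)
  moreover have "(1 :: complex) \<cdot>\<^sub>m 1\<^sub>m d = 1\<^sub>m d"
    by (rule eq_matI) auto
  ultimately show ?thesis
    using PP by (simp add: d_def)
qed

lemma chain_op_contraction:
  assumes P_pauli: "\<forall>i \<in> {1..m}. is_pauli n (P i) \<and> is_hermitian (P i)"
    and U_cliff: "\<forall>i \<in> {1..m + 1}. is_clifford n (U i)"
    and \<beta>_sign: "\<forall>i \<in> {1..m}. \<beta> i \<in> {-1, 1}"
    and "k \<le> m"
  shows "contraction (2 ^ n) (chain_op n U P \<beta> k)"
  using \<open>k \<le> m\<close>
proof (induction k)
  case 0
  then show ?case
    using U_cliff by (auto simp: is_clifford_def intro: unitary_imp_contraction)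
next
  case (Suc k)
  have "contraction (2 ^ n) (U (k + 2))"
    using U_cliff Suc.prems by (auto simp: is_clifford_def intro: unitary_imp_contraction)
  moreover have "contraction (2 ^ n) ((1 / 2 :: complex) \<cdot>\<^sub>m (1\<^sub>m (2 ^ n) + of_int (\<beta> (k + 1)) \<cdot>\<^sub>m P (k + 1)))"
  proof -
    have "is_pauli n (P (k + 1))" "is_hermitian (P (k + 1))" "\<beta> (k + 1) \<in> {-1, 1}"
      using P_pauli \<beta>_sign Suc.prems by auto
    then show ?thesis
      using hermitian_involution_projector[OF pauli_carrier _ hermitian_pauli_square]
      by (intro hermitian_idempotent_imp_contraction) (auto simp: is_hermitian_def pauli_carrier)
  qed
  moreover have "contraction (2 ^ n) (chain_op n U P \<beta> k)"
    using Suc by simp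
  ultimately show ?case
    by (simp add: contraction_mult)
qed

theorem mainTheorem8:
  fixes n m :: nat and P U :: "nat \<Rightarrow> complex mat" and \<beta> :: "nat \<Rightarrow> int" and E :: "complex mat"
  assumes P_pauli: "\<forall>i \<in> {1..m}. is_pauli n (P i) \<and> is_hermitian (P i)"
    and U_cliff: "\<forall>i \<in> {1..m + 1}. is_clifford n (U i)"
    and \<beta>_sign: "\<forall>i \<in> {1..m}. \<beta> i \<in> {-1, 1}"
    and E_def: "E = chain_op n U P \<beta> m"
    and idem: "E * E = E"
  shows "mat_adjoint E = E \<and> E * E = E"
proof -
  have "contraction (2 ^ n) E"
    unfolding E_def using P_pauli U_cliff \<beta>_sign by (rule chain_op_contraction) simp
  with idem show ?thesis
    using idempotent_contraction_hermitian by blast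
qed

end
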